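(* Let $k$ be a commutative associative unital ring, $R$ a commutative associative unital $k$-algebra and $B$ an $R$-algebra. Assume $\beta\in\mathrm{IBF}_{(R,k)}(B)$ is nonsingular. Then $\mathrm{Cent}_R(B)\cong\mathrm{IBF}_{(R,k)}(B)$ as $R$-modules. If furthermore $B$ is a central $R$-algebra, then $\mathrm{IBF}_{(R,k)}(B)$ is a free $R$-module of rank $1$ with basis $\beta$: $\mathrm{IBF}_{(R,k)}(B)=R\beta\cong R$.
   Context: An $R$-algebra is an $R$-module with an $R$-bilinear product (no identities assumed). A $k$-bilinear map $\beta\colon B\times B\to k$ is $(R,k)$-bilinear if $\beta(rb_1,b_2)=\beta(b_1,rb_2)$ for $r\in R$; it is invariant if $\beta(ab,c)=\beta(a,bc)=\beta(b,ca)$. $\mathrm{IBF}_{(R,k)}(B)$ is the $R$-module of invariant $(R,k)$-bilinear maps $B\times B\to k$, with $(r\beta)(b_1,b_2)=\beta(rb_1,b_2)$. $\beta$ is nonsingular if the $R$-linear map $B\to B^*=\mathrm{Hom}_k(B,k)$, $b\mapsto\beta(b,-)$, is bijective (where $(r\varphi)(b)=\varphi(rb)$). $\mathrm{Cent}_R(B)=\{\chi\in\mathrm{End}_R(B):\chi(ab)=a\chi(b)=\chi(a)b\}$; $B$ is central if $R\to\mathrm{Cent}_R(B)$, $r\mapsto(b\mapsto rb)$, is an isomorphism. *)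

theory Defs
  imports Main "HOL.Modules"
begin

text \<open>k, R commutative unital rings (types 'k, 'r); alg : k \<Rightarrow> R the structure map
  making R a k-algebra; sm : the R-module structure on B (type 'b); mul : the product of B.
  k acts on B through alg.\<close>

definition unital_ring_hom :: "('k::comm_ring_1 \<Rightarrow> 'r::comm_ring_1) \<Rightarrow> bool" where
  "unital_ring_hom alg \<longleftrightarrow> alg 1 = 1 \<and> (\<forall>a b. alg (a + b) = alg a + alg b \<and> alg (a * b) = alg a * alg b)"

definition R_algebra :: "('r::comm_ring_1 \<Rightarrow> 'b::ab_group_add \<Rightarrow> 'b) \<Rightarrow> ('b \<Rightarrow> 'b \<Rightarrow> 'b) \<Rightarrow> bool" where
  "R_algebra sm mul \<longleftrightarrow> module sm \<and>
     (\<forall>x y z. mul (x + y) z = mul x z + mul y z \<and> mul x (y + z) = mul x y + mul x z) \<and>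
     (\<forall>r x y. mul (sm r x) y = sm r (mul x y) \<and> mul x (sm r y) = sm r (mul x y))"

definition k_bilinear :: "('k::comm_ring_1 \<Rightarrow> 'r::comm_ring_1) \<Rightarrow> ('r \<Rightarrow> 'b::ab_group_add \<Rightarrow> 'b) \<Rightarrow> ('b \<Rightarrow> 'b \<Rightarrow> 'k) \<Rightarrow> bool" where
  "k_bilinear alg sm \<beta> \<longleftrightarrow>
     (\<forall>x y z. \<beta> (x + y) z = \<beta> x z + \<beta> y z \<and> \<beta> x (y + z) = \<beta> x y + \<beta> x z) \<and>
     (\<forall>c x y. \<beta> (sm (alg c) x) y = c * \<beta> x y \<and> \<beta> x (sm (alg c) y) = c * \<beta> x y)"

definition Rk_bilinear :: "('k::comm_ring_1 \<Rightarrow> 'r::comm_ring_1) \<Rightarrow> ('r \<Rightarrow> 'b::ab_group_add \<Rightarrow> 'b) \<Rightarrow> ('b \<Rightarrow> 'b \<Rightarrow> 'k) \<Rightarrow> bool" where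
  "Rk_bilinear alg sm \<beta> \<longleftrightarrow> k_bilinear alg sm \<beta> \<and> (\<forall>r x y. \<beta> (sm r x) y = \<beta> x (sm r y))"

definition invariant_form :: "('b \<Rightarrow> 'b \<Rightarrow> 'b) \<Rightarrow> ('b \<Rightarrow> 'b \<Rightarrow> 'k) \<Rightarrow> bool" where
  "invariant_form mul \<beta> \<longleftrightarrow> (\<forall>a b c. \<beta> (mul a b) c = \<beta> a (mul b c) \<and> \<beta> a (mul b c) = \<beta> b (mul c a))"

definition IBF :: "('k::comm_ring_1 \<Rightarrow> 'r::comm_ring_1) \<Rightarrow> ('r \<Rightarrow> 'b::ab_group_add \<Rightarrow> 'b) \<Rightarrow> ('b \<Rightarrow> 'b \<Rightarrow> 'b) \<Rightarrow> ('b \<Rightarrow> 'b \<Rightarrow> 'k) set" where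
  "IBF alg sm mul = {\<beta>. Rk_bilinear alg sm \<beta> \<and> invariant_form mul \<beta>}"

definition ibf_scale :: "('r \<Rightarrow> 'b \<Rightarrow> 'b) \<Rightarrow> 'r \<Rightarrow> ('b \<Rightarrow> 'b \<Rightarrow> 'k) \<Rightarrow> ('b \<Rightarrow> 'b \<Rightarrow> 'k)" where
  "ibf_scale sm r \<beta> = (\<lambda>x y. \<beta> (sm r x) y)"

definition kdual :: "('k::comm_ring_1 \<Rightarrow> 'r::comm_ring_1) \<Rightarrow> ('r \<Rightarrow> 'b::ab_group_add \<Rightarrow> 'b) \<Rightarrow> ('b \<Rightarrow> 'k) set" where
  "kdual alg sm = {\<phi>. (\<forall>x y. \<phi> (x + y) = \<phi> x + \<phi> y) \<and> (\<forall>c x. \<phi> (sm (alg c) x) = c * \<phi> x)}"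

definition nonsingular :: "('k::comm_ring_1 \<Rightarrow> 'r::comm_ring_1) \<Rightarrow> ('r \<Rightarrow> 'b::ab_group_add \<Rightarrow> 'b) \<Rightarrow> ('b \<Rightarrow> 'b \<Rightarrow> 'k) \<Rightarrow> bool" where
  "nonsingular alg sm \<beta> \<longleftrightarrow> bij_betw (\<lambda>b. \<beta> b) UNIV (kdual alg sm)"

definition Cent :: "('r::comm_ring_1 \<Rightarrow> 'b::ab_group_add \<Rightarrow> 'b) \<Rightarrow> ('b \<Rightarrow> 'b \<Rightarrow> 'b) \<Rightarrow> ('b \<Rightarrow> 'b) set" where
  "Cent sm mul = {\<chi>. (\<forall>x y. \<chi> (x + y) = \<chi> x + \<chi> y) \<and> (\<forall>r x. \<chi> (sm r x) = sm r (\<chi> x)) \<and>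
      (\<forall>a b. \<chi> (mul a b) = mul a (\<chi> b) \<and> mul a (\<chi> b) = mul (\<chi> a) b)}"

text \<open>Central: r \<mapsto> (b \<mapsto> rb) is an isomorphism R \<rightarrow> Cent_R(B) (it is always R-linear,
  so this amounts to bijectivity onto Cent_R(B)).\<close>
definition central :: "('r::comm_ring_1 \<Rightarrow> 'b::ab_group_add \<Rightarrow> 'b) \<Rightarrow> ('b \<Rightarrow> 'b \<Rightarrow> 'b) \<Rightarrow> bool" where
  "central sm mul \<longleftrightarrow> bij_betw (\<lambda>r b. sm r b) UNIV (Cent sm mul)"

end

theory Submission
  imports Defs
begin

text \<open>A centroid element \<chi> is sent to the form \<open>(x, y) \<mapsto> \<beta> (\<chi> x) y\<close>. Invariance of \<beta>
  makes this form invariant whenever \<chi> commutes with left and right multiplications.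
  Conversely, nonsingularity lets every row \<open>\<gamma> x\<close> of an invariant form \<gamma> be written as
  \<open>\<beta> (\<chi> x)\<close>, and transporting the identities of \<gamma> through the injective map
  \<open>b \<mapsto> \<beta> b\<close> shows that \<chi> lies in the centroid. When \<open>R \<rightarrow> Cent\<^sub>R(B)\<close> is bijective,
  composing it with this correspondence sends \<open>r\<close> to \<open>r\<beta>\<close>.\<close>

definition centroid_form :: "('b \<Rightarrow> 'b \<Rightarrow> 'k) \<Rightarrow> ('b \<Rightarrow> 'b) \<Rightarrow> ('b \<Rightarrow> 'b \<Rightarrow> 'k)" where
  "centroid_form \<beta> \<chi> = (\<lambda>x y. \<beta> (\<chi> x) y)"

lemma IBF_D:
  assumes "\<gamma> \<in> IBF alg sm mul"
  shows IBF_add_left: "\<gamma> (x + y) z = \<gamma> x z + \<gamma> y z"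
    and IBF_add_right: "\<gamma> x (y + z) = \<gamma> x y + \<gamma> x z"
    and IBF_scale_left: "\<gamma> (sm (alg c) x) y = c * \<gamma> x y"
    and IBF_scale_right: "\<gamma> x (sm (alg c) y) = c * \<gamma> x y"
    and IBF_balanced: "\<gamma> (sm r x) y = \<gamma> x (sm r y)"
    and IBF_assoc: "\<gamma> (mul a b) c' = \<gamma> a (mul b c')"
    and IBF_cyclic: "\<gamma> a (mul b c') = \<gamma> b (mul c' a)"
  using assms unfolding IBF_def Rk_bilinear_def k_bilinear_def invariant_form_def by blast+

lemma IBF_commute_product:
  assumes "\<gamma> \<in> IBF alg sm mul"
  shows "\<gamma> (mul a b) c = \<gamma> c (mul a b)"
  using IBF_assoc[OF assms] IBF_cyclic[OF assms] by metis

lemma IBF_row_in_kdual: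
  assumes "\<gamma> \<in> IBF alg sm mul"
  shows "\<gamma> x \<in> kdual alg sm"
  unfolding kdual_def using IBF_add_right[OF assms] IBF_scale_right[OF assms] by blast

lemma Cent_D:
  assumes "\<chi> \<in> Cent sm mul"
  shows Cent_add: "\<chi> (x + y) = \<chi> x + \<chi> y"
    and Cent_scale: "\<chi> (sm r x) = sm r (\<chi> x)"
    and Cent_mul_left: "\<chi> (mul a b) = mul a (\<chi> b)"
    and Cent_mul_right: "\<chi> (mul a b) = mul (\<chi> a) b"
  using assms unfolding Cent_def by auto

lemma nonsingular_inj:
  assumes "nonsingular alg sm \<beta>"
  shows "inj \<beta>"
  using assms unfolding nonsingular_def bij_betw_def by simp

lemma centroid_form_add:
  assumes "\<beta> \<in> IBF alg sm mul"
  shows "centroid_form \<beta> (\<lambda>x. \<chi>\<^sub>1 x + \<chi>\<^sub>2 x) = (\<lambda>x y. centroid_form \<beta> \<chi>\<^sub>1 x y + centroid_form \<beta> \<chi>\<^sub>2 x y)"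
  unfolding centroid_form_def by (simp add: IBF_add_left[OF assms] fun_eq_iff)

lemma centroid_form_scale:
  assumes "\<chi> \<in> Cent sm mul"
  shows "centroid_form \<beta> (\<lambda>x. sm r (\<chi> x)) = ibf_scale sm r (centroid_form \<beta> \<chi>)"
  unfolding centroid_form_def ibf_scale_def by (simp add: Cent_scale[OF assms])

lemma centroid_form_module_action: "centroid_form \<beta> (\<lambda>x. sm r x) = ibf_scale sm r \<beta>"
  unfolding centroid_form_def ibf_scale_def ..

lemma centroid_form_in_IBF:
  assumes \<beta>: "\<beta> \<in> IBF alg sm mul" and \<chi>: "\<chi> \<in> Cent sm mul"
  shows "centroid_form \<beta> \<chi> \<in> IBF alg sm mul"
proof -
  have assoc: "\<beta> (\<chi> (mul a b)) c = \<beta> (\<chi> a) (mul b c)" for a b c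
    by (simp add: Cent_mul_right[OF \<chi>] IBF_assoc[OF \<beta>])
  have cyclic: "\<beta> (\<chi> a) (mul b c) = \<beta> (\<chi> b) (mul c a)" for a b c
  proof -
    have "\<beta> (\<chi> a) (mul b c) = \<beta> b (mul c (\<chi> a))" by (rule IBF_cyclic[OF \<beta>])
    also have "\<dots> = \<beta> (mul c (\<chi> a)) b" by (metis IBF_commute_product[OF \<beta>])
    also have "\<dots> = \<beta> c (mul a (\<chi> b))"
      by (metis IBF_assoc[OF \<beta>] Cent_mul_left[OF \<chi>] Cent_mul_right[OF \<chi>])
    also have "\<dots> = \<beta> (\<chi> b) (mul c a)" by (metis IBF_cyclic[OF \<beta>])
    finally show ?thesis .
  qed
  show ?thesis
    unfolding IBF_def Rk_bilinear_def k_bilinear_def invariant_form_def centroid_form_def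
    using assoc cyclic
    by (auto simp: Cent_add[OF \<chi>] Cent_scale[OF \<chi>] IBF_D[OF \<beta>])
qed

lemma representing_map_in_Cent:
  assumes \<beta>: "\<beta> \<in> IBF alg sm mul" and inj: "inj \<beta>"
    and \<gamma>: "\<gamma> \<in> IBF alg sm mul" and rep: "\<And>x. \<beta> (\<chi> x) = \<gamma> x"
  shows "\<chi> \<in> Cent sm mul"
proof -
  have eqI: "u = v" if "\<And>c. \<beta> u c = \<beta> v c" for u v
    using inj that by (auto dest: injD)
  have add: "\<chi> (x + y) = \<chi> x + \<chi> y" for x y
    by (rule eqI) (simp add: rep IBF_add_left[OF \<beta>] IBF_add_left[OF \<gamma>])
  have scale: "\<chi> (sm r x) = sm r (\<chi> x)" for r x
    by (rule eqI) (simp add: rep IBF_balanced[OF \<beta>] IBF_balanced[OF \<gamma>])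
  have mul_right: "\<chi> (mul a b) = mul (\<chi> a) b" for a b
    by (rule eqI) (simp add: rep IBF_assoc[OF \<beta>] IBF_assoc[OF \<gamma>])
  have mul_left: "\<chi> (mul a b) = mul a (\<chi> b)" for a b
  proof (rule eqI)
    fix c
    have "\<beta> (mul a (\<chi> b)) c = \<beta> (\<chi> b) (mul c a)"
      by (metis IBF_assoc[OF \<beta>] IBF_cyclic[OF \<beta>])
    also have "\<dots> = \<gamma> (mul a b) c"
      by (metis rep IBF_assoc[OF \<gamma>] IBF_cyclic[OF \<gamma>])
    finally show "\<beta> (\<chi> (mul a b)) c = \<beta> (mul a (\<chi> b)) c" by (simp add: rep)
  qed
  show ?thesis
    unfolding Cent_def using add scale mul_left mul_right by simp
qed

lemma centroid_form_surj:
  assumes \<beta>: "\<beta> \<in> IBF alg sm mul" "nonsingular alg sm \<beta>"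
    and \<gamma>: "\<gamma> \<in> IBF alg sm mul"
  shows "\<gamma> \<in> centroid_form \<beta> ` Cent sm mul"
proof -
  have "\<exists>b. \<beta> b = \<gamma> x" for x
    using \<beta>(2) IBF_row_in_kdual[OF \<gamma>] unfolding nonsingular_def bij_betw_def
    by (metis imageE)
  then obtain \<chi> where rep: "\<And>x. \<beta> (\<chi> x) = \<gamma> x" by metis
  have "\<chi> \<in> Cent sm mul"
    using representing_map_in_Cent[OF \<beta>(1) nonsingular_inj[OF \<beta>(2)] \<gamma> rep] .
  moreover have "centroid_form \<beta> \<chi> = \<gamma>"
    unfolding centroid_form_def using rep by simp
  ultimately show ?thesis by blast
qed

lemma bij_betw_centroid_form:
  assumes "\<beta> \<in> IBF alg sm mul" "nonsingular alg sm \<beta>"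
  shows "bij_betw (centroid_form \<beta>) (Cent sm mul) (IBF alg sm mul)"
proof -
  have "inj (centroid_form \<beta>)"
    using nonsingular_inj[OF assms(2)]
    by (intro injI) (simp add: centroid_form_def fun_eq_iff injD)
  then show ?thesis
    unfolding bij_betw_def
    using centroid_form_in_IBF[OF assms(1)] centroid_form_surj[OF assms] by (auto intro: inj_on_subset)
qed

lemma central_bij_betw_ibf_scale:
  assumes "\<beta> \<in> IBF alg sm mul" "nonsingular alg sm \<beta>" "central sm mul"
  shows "bij_betw (\<lambda>r. ibf_scale sm r \<beta>) UNIV (IBF alg sm mul)"
proof -
  have "(\<lambda>r. ibf_scale sm r \<beta>) = centroid_form \<beta> \<circ> (\<lambda>r x. sm r x)"
    by (simp add: fun_eq_iff centroid_form_module_action)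
  then show ?thesis
    using bij_betw_trans[OF assms(3)[unfolded central_def] bij_betw_centroid_form[OF assms(1,2)]]
    by simp
qed

theorem corollary3p8:
  fixes alg :: "'k::comm_ring_1 \<Rightarrow> 'r::comm_ring_1"
    and sm :: "'r \<Rightarrow> 'b::ab_group_add \<Rightarrow> 'b"
    and mul :: "'b \<Rightarrow> 'b \<Rightarrow> 'b"
    and \<beta> :: "'b \<Rightarrow> 'b \<Rightarrow> 'k"
  assumes "unital_ring_hom alg"
    and "R_algebra sm mul"
    and "\<beta> \<in> IBF alg sm mul"
    and "nonsingular alg sm \<beta>"
  shows "(\<exists>f. bij_betw f (Cent sm mul) (IBF alg sm mul) \<and>
            (\<forall>\<chi>1\<in>Cent sm mul. \<forall>\<chi>2\<in>Cent sm mul.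
               f (\<lambda>x. \<chi>1 x + \<chi>2 x) = (\<lambda>x y. f \<chi>1 x y + f \<chi>2 x y)) \<and>
            (\<forall>r. \<forall>\<chi>\<in>Cent sm mul. f (\<lambda>x. sm r (\<chi> x)) = ibf_scale sm r (f \<chi>)))
       \<and> (central sm mul \<longrightarrow>
            IBF alg sm mul = range (\<lambda>r. ibf_scale sm r \<beta>) \<and>
            bij_betw (\<lambda>r. ibf_scale sm r \<beta>) UNIV (IBF alg sm mul))"
proof (intro conjI impI)
  show "\<exists>f. bij_betw f (Cent sm mul) (IBF alg sm mul) \<and>
            (\<forall>\<chi>1\<in>Cent sm mul. \<forall>\<chi>2\<in>Cent sm mul.
               f (\<lambda>x. \<chi>1 x + \<chi>2 x) = (\<lambda>x y. f \<chi>1 x y + f \<chi>2 x y)) \<and>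
            (\<forall>r. \<forall>\<chi>\<in>Cent sm mul. f (\<lambda>x. sm r (\<chi> x)) = ibf_scale sm r (f \<chi>))"
    using bij_betw_centroid_form[OF assms(3,4)] centroid_form_add[OF assms(3)] centroid_form_scale
    by blast
  assume "central sm mul"
  then show bij: "bij_betw (\<lambda>r. ibf_scale sm r \<beta>) UNIV (IBF alg sm mul)"
    using central_bij_betw_ibf_scale assms(3,4) by blast
  then show "IBF alg sm mul = range (\<lambda>r. ibf_scale sm r \<beta>)"
    unfolding bij_betw_def by simp
qed

end
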